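(* Let $F,G\in\mathbb R^{n\times n}$ with $F$ Hurwitz. Then there exist $h_M>0$ and $\kappa>0$, together with symmetric positive definite $P_1,Q$ and matrices $P_2,P_3\in\mathbb R^{n\times n}$, such that $\Theta(h_M,0)\prec0$ and $\Theta(h_M,\kappa)\prec0$.
   Context: For $h_M>0$, $\kappa\ge0$ and matrices $P_1,Q,P_2,P_3$, define $$\Theta(h_M,\kappa)=\begin{bmatrix}2\kappa P_1+F^\top P_2+P_2^\top F& P_1-P_2^\top+F^\top P_3& h_MP_2^\top G\\ P_1-P_2+P_3^\top F& -P_3-P_3^\top+h_MQ& h_MP_3^\top G\\ h_MG^\top P_2& h_MG^\top P_3& -h_Me^{-2\kappa h_M}Q\end{bmatrix}.$$ The notation $\prec0$ means negative definite. *)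

theory Defs
  imports "HOL-Analysis.Analysis"
begin

definition cmat :: "real^'n^'n \<Rightarrow> complex^'n^'n" where
  "cmat A = (\<chi> i j. complex_of_real (A $ i $ j))"

definition hurwitz :: "real^'n^'n \<Rightarrow> bool" where
  "hurwitz F \<longleftrightarrow> (\<forall>z::complex. det (mat z - cmat F) = 0 \<longrightarrow> Re z < 0)"

definition sym_mat :: "real^'m^'m \<Rightarrow> bool" where
  "sym_mat A \<longleftrightarrow> transpose A = A"

definition pos_def :: "real^'m^'m \<Rightarrow> bool" where
  "pos_def A \<longleftrightarrow> sym_mat A \<and> (\<forall>x. x \<noteq> 0 \<longrightarrow> x \<bullet> (A *v x) > 0)"

definition neg_def :: "real^'m^'m \<Rightarrow> bool" where
  "neg_def A \<longleftrightarrow> sym_mat A \<and> (\<forall>x. x \<noteq> 0 \<longrightarrow> x \<bullet> (A *v x) < 0)"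

definition blk3 ::
  "real^'n^'n \<Rightarrow> real^'n^'n \<Rightarrow> real^'n^'n \<Rightarrow>
   real^'n^'n \<Rightarrow> real^'n^'n \<Rightarrow> real^'n^'n \<Rightarrow>
   real^'n^'n \<Rightarrow> real^'n^'n \<Rightarrow> real^'n^'n \<Rightarrow> real^('n + ('n + 'n))^('n + ('n + 'n))" where
  "blk3 A11 A12 A13 A21 A22 A23 A31 A32 A33 = (\<chi> i j.
     (case i of
        Inl a \<Rightarrow> (case j of Inl b \<Rightarrow> A11$a$b | Inr (Inl b) \<Rightarrow> A12$a$b | Inr (Inr b) \<Rightarrow> A13$a$b)
      | Inr (Inl a) \<Rightarrow> (case j of Inl b \<Rightarrow> A21$a$b | Inr (Inl b) \<Rightarrow> A22$a$b | Inr (Inr b) \<Rightarrow> A23$a$b)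
      | Inr (Inr a) \<Rightarrow> (case j of Inl b \<Rightarrow> A31$a$b | Inr (Inl b) \<Rightarrow> A32$a$b | Inr (Inr b) \<Rightarrow> A33$a$b)))"

definition Theta ::
  "real^'n^'n \<Rightarrow> real^'n^'n \<Rightarrow> real^'n^'n \<Rightarrow> real^'n^'n \<Rightarrow> real^'n^'n \<Rightarrow> real^'n^'n
   \<Rightarrow> real \<Rightarrow> real \<Rightarrow> real^('n + ('n + 'n))^('n + ('n + 'n))" where
  "Theta F G P1 Q P2 P3 hM \<kappa> = blk3
     ((2 * \<kappa>) *\<^sub>R P1 + transpose F ** P2 + transpose P2 ** F)
     (P1 - transpose P2 + transpose F ** P3)
     (hM *\<^sub>R (transpose P2 ** G))
     (P1 - P2 + transpose P3 ** F)
     (- P3 - transpose P3 + hM *\<^sub>R Q)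
     (hM *\<^sub>R (transpose P3 ** G))
     (hM *\<^sub>R (transpose G ** P2))
     (hM *\<^sub>R (transpose G ** P3))
     ((- hM * exp (-2 * \<kappa> * hM)) *\<^sub>R Q)"

end

theory Submission
  imports Defs "Jordan_Normal_Form.Schur_Decomposition"
begin

text \<open>
  A Hurwitz matrix \<open>F\<close> has a quadratic Lyapunov function. Triangularise \<open>F\<close> over \<open>\<complex>\<close>
  (Schur) and conjugate by \<open>diag(\<delta>\<^sup>i)\<close>: for small \<open>\<delta>\<close> the strictly upper triangular part is
  negligible against the real parts of the eigenvalues, so for the resulting similarity \<open>K\<close>
  the matrix \<open>P = Re (K\<^sup>* K)\<close> satisfies \<open>x \<bullet> P F x \<le> - c |x|\<^sup>2\<close>.

  Now take \<open>P1 = P2 = P\<close>, \<open>Q = I\<close> and \<open>P3 = \<epsilon> I\<close>. The coupling of the first two block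
  components of \<open>\<Theta>\<close> then collapses to \<open>\<epsilon> (F x) \<bullet> y\<close>, and Cauchy-Schwarz together with
  \<open>b u v \<le> a u\<^sup>2 + c v\<^sup>2\<close> (for \<open>b\<^sup>2 \<le> 4 a c\<close>) bound the quadratic form of \<open>\<Theta>(h, k)\<close> by
  \<open>- (c/2) |x|\<^sup>2 - (\<epsilon>/2) |y|\<^sup>2 - (h e\<^sup>-\<^sup>2/2) |w|\<^sup>2\<close> for \<open>\<epsilon> = c / (4 |F|\<^sup>2)\<close>, all small \<open>h\<close>
  and all \<open>0 \<le> k \<le> \<kappa>\<close>.
\<close>

(* Jordan_Normal_Form's Matrix.mat hides the Cartesian identity matrix mat 1. *)
abbreviation id_mat :: "'a::{zero,one}^'n^'n" where
  "id_mat \<equiv> Finite_Cartesian_Product.mat 1"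

(* An enumeration of the index type: it identifies Cartesian matrices with Jordan_Normal_Form
   matrices and fixes the order in which Schur forms are upper triangular. *)
definition idx :: "'n::finite \<Rightarrow> nat" where
  "idx = (SOME h. bij_betw h (UNIV::'n set) {0..<CARD('n)})"

lemma bij_betw_idx: "bij_betw (idx::'n::finite \<Rightarrow> nat) UNIV {0..<CARD('n)}"
proof -
  have "\<exists>h. bij_betw h (UNIV::'n set) {0..<CARD('n)}"
    using ex_bij_betw_finite_nat[of "UNIV::'n set"] by simp
  then show ?thesis unfolding idx_def by (rule someI_ex)
qed

lemma idx_eq_iff: "idx (a::'n::finite) = idx b \<longleftrightarrow> a = b"
  using bij_betw_idx[where 'n='n] by (auto simp: bij_betw_def inj_on_def)

lemma idx_less_card: "idx (a::'n::finite) < CARD('n)"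
  using bij_betw_idx[where 'n='n] by (auto simp: bij_betw_def)

lemma idx_surj: "i < CARD('n::finite) \<Longrightarrow> \<exists>a::'n. idx a = i"
  using bij_betw_idx[where 'n='n] by (metis atLeastLessThan_iff bij_betw_def imageE zero_le)

lemma sum_atLeast0_lessThan_card_idx:
  "(\<Sum>k = 0..<CARD('n). f k) = (\<Sum>a\<in>(UNIV::'n::finite set). f (idx a))"
  using sum.reindex_bij_betw[OF bij_betw_idx[where 'n='n], of f] by simp

definition mat_of_cart :: "'a^'n^'n \<Rightarrow> 'a mat" where
  "mat_of_cart M = Matrix.mat CARD('n::finite) CARD('n) (\<lambda>(i, j). M $ inv_into UNIV idx i $ inv_into UNIV idx j)"

definition cart_of_mat :: "'a mat \<Rightarrow> 'a^'n::finite^'n" where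
  "cart_of_mat A = (\<chi> a b. A $$ (idx a, idx b))"

definition cart_of_vec :: "'a Matrix.vec \<Rightarrow> 'a^'n::finite" where
  "cart_of_vec v = (\<chi> a. vec_index v (idx a))"

lemma inv_into_idx_idx [simp]: "inv_into UNIV idx (idx (a::'n::finite)) = a"
  by (simp add: idx_eq_iff inj_def)

lemma mat_of_cart_carrier: "mat_of_cart (M::'a^'n::finite^'n) \<in> carrier_mat CARD('n) CARD('n)"
  unfolding mat_of_cart_def by simp

lemma cart_of_mat_of_cart [simp]: "cart_of_mat (mat_of_cart (M::'a^'n::finite^'n)) = M"
  unfolding cart_of_mat_def mat_of_cart_def
  by (simp add: idx_less_card Finite_Cartesian_Product.vec_eq_iff)

lemma cart_of_mat_mult:
  fixes A B :: "'a::comm_ring_1 mat"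
  assumes "A \<in> carrier_mat CARD('n::finite) CARD('n)" "B \<in> carrier_mat CARD('n) CARD('n)"
  shows "(cart_of_mat (A * B) :: 'a^'n^'n) = cart_of_mat A ** cart_of_mat B"
  using assms
  by (simp add: cart_of_mat_def matrix_matrix_mult_def Finite_Cartesian_Product.vec_eq_iff
      idx_less_card scalar_prod_def sum_atLeast0_lessThan_card_idx)

lemma cart_of_mat_one:
  "(cart_of_mat (1\<^sub>m CARD('n)) :: 'a::comm_ring_1^'n::finite^'n) = id_mat"
  by (simp add: cart_of_mat_def Finite_Cartesian_Product.vec_eq_iff idx_less_card idx_eq_iff
      Finite_Cartesian_Product.mat_def)

lemma cart_of_vec_mult:
  fixes A :: "'a::comm_ring_1 mat"
  assumes "A \<in> carrier_mat CARD('n::finite) CARD('n)" "v \<in> carrier_vec CARD('n)"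
  shows "(cart_of_vec (A *\<^sub>v v) :: 'a^'n) = cart_of_mat A *v cart_of_vec v"
  using assms
  by (simp add: cart_of_mat_def cart_of_vec_def matrix_vector_mult_def
      Finite_Cartesian_Product.vec_eq_iff idx_less_card scalar_prod_def
      sum_atLeast0_lessThan_card_idx)

lemma cart_of_vec_smult:
  "v \<in> carrier_vec CARD('n::finite) \<Longrightarrow> (cart_of_vec (e \<cdot>\<^sub>v v) :: 'a::comm_ring_1^'n) = e *s cart_of_vec v"
  by (simp add: cart_of_vec_def Finite_Cartesian_Product.vec_eq_iff idx_less_card)

lemma cart_of_vec_eq_0_iff:
  assumes "v \<in> carrier_vec CARD('n::finite)"
  shows "(cart_of_vec v :: 'a::zero^'n) = 0 \<longleftrightarrow> v = 0\<^sub>v CARD('n)"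
  using assms idx_surj[where 'n='n]
  by (auto simp: cart_of_vec_def Finite_Cartesian_Product.vec_eq_iff vec_eq_iff idx_less_card)

lemma eigenvector_cart_of_mat:
  assumes A: "A \<in> carrier_mat CARD('n::finite) CARD('n)" and "eigenvalue A e"
  shows "\<exists>v::'a::field^'n. v \<noteq> 0 \<and> cart_of_mat A *v v = e *s v"
proof -
  obtain v where "eigenvector A v e"
    using \<open>eigenvalue A e\<close> unfolding eigenvalue_def by blast
  then have v: "v \<in> carrier_vec CARD('n)" "v \<noteq> 0\<^sub>v CARD('n)" "A *\<^sub>v v = e \<cdot>\<^sub>v v"
    unfolding eigenvector_def using A by auto
  show ?thesis
    by (rule exI[of _ "cart_of_vec v"])
      (use v A in \<open>simp add: cart_of_vec_eq_0_iff cart_of_vec_smult flip: cart_of_vec_mult\<close>)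
qed

lemma schur_triangularization_cart:
  fixes A :: "complex^'n::finite^'n"
  obtains S B T :: "complex^'n^'n"
  where "A = S ** B ** T" and "S ** T = id_mat" and "T ** S = id_mat"
    and "\<And>a b. idx b < idx a \<Longrightarrow> B $ a $ b = 0"
    and "\<And>a. \<exists>v. v \<noteq> 0 \<and> A *v v = B $ a $ a *s v"
proof -
  let ?n = "CARD('n)" and ?A = "mat_of_cart A"
  have A: "?A \<in> carrier_mat ?n ?n" by (rule mat_of_cart_carrier)
  obtain es where cp: "char_poly ?A = (\<Prod>a\<leftarrow>es. [:- a, 1:])"
    using char_poly_factorized[OF A] by blast
  obtain B P Q where sd: "schur_decomposition ?A es = (B, P, Q)"
    by (cases "schur_decomposition ?A es") auto
  from schur_decomposition[OF A cp sd] have sim: "similar_mat_wit ?A B P Q"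
    and ut: "upper_triangular B" and dg: "diag_mat B = es" by auto
  from sim A have P: "P \<in> carrier_mat ?n ?n" and B: "B \<in> carrier_mat ?n ?n"
    and Q: "Q \<in> carrier_mat ?n ?n" and PQ: "P * Q = 1\<^sub>m ?n" and QP: "Q * P = 1\<^sub>m ?n"
    and AA: "?A = P * B * Q"
    unfolding similar_mat_wit_def Let_def by auto
  show ?thesis
  proof (rule that[of "cart_of_mat P" "cart_of_mat B" "cart_of_mat Q"])
    have "A = cart_of_mat (P * B * Q)" by (simp flip: AA)
    then show "A = cart_of_mat P ** (cart_of_mat B :: complex^'n^'n) ** cart_of_mat Q"
      using P B Q by (simp add: cart_of_mat_mult matrix_mul_assoc)
    show "(cart_of_mat P :: complex^'n^'n) ** cart_of_mat Q = id_mat"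
      using cart_of_mat_mult[OF P Q] PQ cart_of_mat_one by metis
    show "(cart_of_mat Q :: complex^'n^'n) ** cart_of_mat P = id_mat"
      using cart_of_mat_mult[OF Q P] QP cart_of_mat_one by metis
    show "cart_of_mat B $ a $ b = 0" if "idx b < idx a" for a b :: 'n
      using ut B that idx_less_card[of a] unfolding upper_triangular_def cart_of_mat_def by auto
    show "\<exists>v. v \<noteq> 0 \<and> A *v v = cart_of_mat B $ a $ a *s v" for a :: 'n
    proof -
      have "B $$ (idx a, idx a) \<in> set es"
        unfolding dg[symmetric] diag_mat_def using B idx_less_card[of a] by auto
      then have "eigenvalue ?A (B $$ (idx a, idx a))"
        by (simp add: eigenvalue_root_char_poly[OF A] cp poly_prod_list prod_list_zero_iff)
      moreover have "cart_of_mat B $ a $ a = B $$ (idx a, idx a)"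
        by (simp add: cart_of_mat_def)
      ultimately show ?thesis
        using eigenvector_cart_of_mat[OF A] by simp
    qed
  qed
qed

definition diag_cart :: "('n::finite \<Rightarrow> 'a::semiring_1) \<Rightarrow> 'a^'n^'n" where
  "diag_cart d = (\<chi> i j. if i = j then d i else 0)"

lemma diag_cart_mult_nth [simp]: "(diag_cart d ** M) $ i $ j = d i * M $ i $ j"
  by (simp add: diag_cart_def matrix_matrix_mult_def if_distrib if_distribR cong: if_cong)

lemma mult_diag_cart_nth [simp]: "(M ** diag_cart d) $ i $ j = M $ i $ j * d j"
  by (simp add: diag_cart_def matrix_matrix_mult_def if_distrib if_distribR cong: if_cong)

lemma diag_cart_mult_diag_cart: "diag_cart d ** diag_cart e = diag_cart (\<lambda>i. d i * e i)"
  by (simp add: Finite_Cartesian_Product.vec_eq_iff) (simp add: diag_cart_def)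

lemma diag_cart_1: "diag_cart (\<lambda>_. 1) = id_mat"
  by (simp add: diag_cart_def Finite_Cartesian_Product.mat_def)

(* Conjugating a Schur form by diag(\<delta>^idx a) multiplies the entry (a, b) by \<delta>^(idx b - idx a),
   which shrinks everything above the diagonal and keeps the eigenvalues on it. *)
lemma similar_almost_diagonal:
  fixes A :: "complex^'n::finite^'n"
  obtains \<mu> :: "'n \<Rightarrow> complex"
  where "\<And>a. \<exists>v. v \<noteq> 0 \<and> A *v v = \<mu> a *s v"
    and "\<And>\<beta>. \<beta> > 0 \<Longrightarrow> \<exists>K L C. L ** K = id_mat \<and> K ** A = C ** K \<and>
           (\<forall>a. C $ a $ a = \<mu> a) \<and> (\<forall>a b. a \<noteq> b \<longrightarrow> cmod (C $ a $ b) \<le> \<beta>)"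
proof -
  obtain S B T :: "complex^'n^'n" where A: "A = S ** B ** T"
    and ST: "S ** T = id_mat" and TS: "T ** S = id_mat"
    and tri: "\<And>a b. idx b < idx a \<Longrightarrow> B $ a $ b = 0"
    and ev: "\<And>a. \<exists>v. v \<noteq> 0 \<and> A *v v = B $ a $ a *s v"
    by (rule schur_triangularization_cart[of A]) auto
  show ?thesis
  proof (rule that[of "\<lambda>a. B $ a $ a", OF ev])
    fix \<beta> :: real assume "\<beta> > 0"
    define \<delta> where "\<delta> = min 1 (\<beta> / (norm B + 1))"
    have \<delta>: "0 < \<delta>" "\<delta> \<le> 1" "\<delta> * norm B \<le> \<beta>"
    proof -
      show "0 < \<delta>" "\<delta> \<le> 1"
        using \<open>\<beta> > 0\<close> by (auto simp: \<delta>_def intro!: divide_pos_pos add_nonneg_pos)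
      have "\<delta> * (norm B + 1) \<le> \<beta>"
        using \<open>\<beta> > 0\<close> unfolding \<delta>_def by (simp add: min_mult_distrib_right le_divide_eq)
      then show "\<delta> * norm B \<le> \<beta>" using \<open>0 < \<delta>\<close> by (simp add: algebra_simps)
    qed
    define d :: "'n \<Rightarrow> complex" where "d a = complex_of_real (\<delta> ^ idx a)" for a
    have d: "d a \<noteq> 0" for a using \<delta> by (simp add: d_def)
    define D Di where "D = diag_cart d" and "Di = diag_cart (\<lambda>a. inverse (d a))"
    have DDi: "D ** Di = id_mat"
      unfolding D_def Di_def diag_cart_mult_diag_cart using d by (simp add: diag_cart_1)
    define K L C where "K = Di ** T" and "L = S ** D" and "C = Di ** B ** D"
    have C: "C $ a $ b = B $ a $ b * complex_of_real (\<delta> ^ idx b / \<delta> ^ idx a)" for a b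
      by (simp add: C_def D_def Di_def d_def divide_inverse ac_simps)
    show "\<exists>K L C. L ** K = id_mat \<and> K ** A = C ** K \<and>
           (\<forall>a. C $ a $ a = B $ a $ a) \<and> (\<forall>a b. a \<noteq> b \<longrightarrow> cmod (C $ a $ b) \<le> \<beta>)"
    proof (intro exI conjI allI impI)
      have "L ** K = S ** (D ** Di) ** T"
        by (simp add: K_def L_def matrix_mul_assoc)
      then show "L ** K = id_mat"
        by (simp add: DDi ST)
      have "K ** A = Di ** (T ** S) ** B ** T"
        by (simp add: K_def A matrix_mul_assoc)
      also have "\<dots> = Di ** B ** (D ** Di) ** T"
        by (simp add: TS DDi)
      also have "\<dots> = C ** K"
        by (simp add: C_def K_def matrix_mul_assoc)
      finally show "K ** A = C ** K" .
      show "C $ a $ a = B $ a $ a" for a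
        using \<delta> by (simp add: C)
      show "cmod (C $ a $ b) \<le> \<beta>" if "a \<noteq> b" for a b
      proof (cases "idx b < idx a")
        case True
        then show ?thesis using tri \<open>\<beta> > 0\<close> by (simp add: C)
      next
        case False
        then have less: "idx a < idx b" using that idx_eq_iff[of a b] by linarith
        have "\<delta> ^ idx b / \<delta> ^ idx a = \<delta> ^ (idx b - idx a)"
          using \<delta> less by (simp add: power_diff)
        also have "\<dots> \<le> \<delta>"
          using power_decreasing[of 1 "idx b - idx a" \<delta>] \<delta> less by simp
        finally have ratio: "\<delta> ^ idx b / \<delta> ^ idx a \<le> \<delta>" .
        have "cmod (C $ a $ b) = cmod (B $ a $ b) * (\<delta> ^ idx b / \<delta> ^ idx a)"
          using \<delta> by (simp only: C norm_mult norm_of_real) simp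
        also have "\<dots> \<le> cmod (B $ a $ b) * \<delta>"
          using ratio by (rule mult_left_mono) simp
        also have "\<dots> \<le> norm B * \<delta>"
          using \<delta> by (intro mult_right_mono order_trans[OF Finite_Cartesian_Product.norm_nth_le
              Finite_Cartesian_Product.norm_nth_le]) simp_all
        finally show ?thesis using \<delta> by (simp add: mult.commute)
      qed
    qed
  qed
qed

lemma power2_norm_cart: "(norm (v::'a::real_normed_vector^'n::finite))^2 = (\<Sum>a\<in>UNIV. (norm (v $ a))^2)"
  by (simp add: norm_vec_def L2_set_def sum_nonneg)

lemma Re_row_le_diag_dominant:
  fixes C :: "complex^'n::finite^'n" and y :: "complex^'n"
  assumes diag: "Re (C $ a $ a) \<le> - \<alpha>" and off: "\<And>b. b \<noteq> a \<Longrightarrow> cmod (C $ a $ b) \<le> \<beta>"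
    and "\<beta> \<ge> 0"
  shows "Re (cnj (y $ a) * (C *v y) $ a)
    \<le> - \<alpha> * (cmod (y $ a))^2 + \<beta> / 2 * (CARD('n) * (cmod (y $ a))^2 + (norm y)^2)"
proof -
  define f where "f b = Re (cnj (y $ a) * C $ a $ b * y $ b)" for b
  define g where "g b = \<beta> / 2 * ((cmod (y $ a))^2 + (cmod (y $ b))^2)" for b
  have "f a = Re (C $ a $ a) * (cmod (y $ a))^2"
    unfolding f_def cmod_power2 by (simp add: algebra_simps power2_eq_square)
  also have "\<dots> \<le> - \<alpha> * (cmod (y $ a))^2"
    using diag by (rule mult_right_mono) simp
  finally have fa: "f a \<le> - \<alpha> * (cmod (y $ a))^2" .
  have fb: "f b \<le> g b" if "b \<noteq> a" for b
  proof -
    have "f b \<le> cmod (cnj (y $ a) * C $ a $ b * y $ b)"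
      unfolding f_def by (rule complex_Re_le_cmod)
    also have "\<dots> = cmod (C $ a $ b) * (cmod (y $ a) * cmod (y $ b))"
      by (simp add: norm_mult)
    also have "\<dots> \<le> \<beta> * (cmod (y $ a) * cmod (y $ b))"
      using off[OF that] by (rule mult_right_mono) simp
    also have "\<dots> \<le> g b"
      using mult_left_mono[OF sum_squares_bound[of "cmod (y $ a)" "cmod (y $ b)"], of "\<beta> / 2"]
        \<open>\<beta> \<ge> 0\<close>
      unfolding g_def by (simp add: algebra_simps)
    finally show ?thesis .
  qed
  have "Re (cnj (y $ a) * (C *v y) $ a) = (\<Sum>b\<in>UNIV. f b)"
    unfolding f_def matrix_vector_mult_def vec_lambda_beta sum_distrib_left Re_sum
    by (simp only: mult.assoc)
  also have "\<dots> = f a + (\<Sum>b\<in>UNIV - {a}. f b)"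
    by (rule sum.remove) auto
  also have "(\<Sum>b\<in>UNIV - {a}. f b) \<le> (\<Sum>b\<in>UNIV. g b)"
    using fb \<open>\<beta> \<ge> 0\<close> by (intro order.trans[OF sum_mono sum_mono2]) (auto simp: g_def)
  also have "(\<Sum>b\<in>UNIV. g b) = \<beta> / 2 * (CARD('n) * (cmod (y $ a))^2 + (norm y)^2)"
    by (simp add: g_def distrib_left sum.distrib power2_norm_cart sum_distrib_left sum_divide_distrib)
  finally show ?thesis using fa by linarith
qed

lemma Re_quadratic_form_le_diag_dominant:
  fixes C :: "complex^'n::finite^'n" and y :: "complex^'n"
  assumes diag: "\<And>a. Re (C $ a $ a) \<le> - \<alpha>" and off: "\<And>a b. a \<noteq> b \<Longrightarrow> cmod (C $ a $ b) \<le> \<beta>"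
    and "\<beta> \<ge> 0" and small: "\<beta> * CARD('n) \<le> \<alpha> / 2"
  shows "(\<Sum>a\<in>UNIV. Re (cnj (y $ a) * (C *v y) $ a)) \<le> - (\<alpha> / 2) * (norm y)^2"
proof -
  have "(\<Sum>a\<in>UNIV. Re (cnj (y $ a) * (C *v y) $ a))
      \<le> (\<Sum>a\<in>UNIV. - \<alpha> * (cmod (y $ a))^2 + \<beta> / 2 * (CARD('n) * (cmod (y $ a))^2 + (norm y)^2))"
    using Re_row_le_diag_dominant[OF diag off \<open>\<beta> \<ge> 0\<close>] by (intro sum_mono) auto
  also have "\<dots> = (\<Sum>a\<in>UNIV. (\<beta> / 2 * CARD('n) - \<alpha>) * (cmod (y $ a))^2 + \<beta> / 2 * (norm y)^2)"
    by (simp add: algebra_simps)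
  also have "\<dots> = (\<beta> / 2 * CARD('n) - \<alpha>) * (\<Sum>a\<in>UNIV. (cmod (y $ a))^2)
      + CARD('n) * (\<beta> / 2 * (norm y)^2)"
    by (simp add: sum.distrib flip: sum_distrib_left)
  also have "\<dots> = (\<beta> * CARD('n) - \<alpha>) * (norm y)^2"
    by (simp flip: power2_norm_cart) (simp add: algebra_simps)
  also have "\<dots> \<le> - (\<alpha> / 2) * (norm y)^2"
    using small by (intro mult_right_mono) auto
  finally show ?thesis .
qed

definition cvec :: "real^'n \<Rightarrow> complex^'n" where
  "cvec x = (\<chi> a. complex_of_real (x $ a))"

lemma norm_cvec [simp]: "norm (cvec x) = norm x"
  by (simp add: cvec_def norm_vec_def)

lemma cmat_mult_cvec: "cmat F *v cvec x = cvec (F *v x)"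
  by (simp add: Finite_Cartesian_Product.vec_eq_iff cvec_def cmat_def matrix_vector_mult_def)

definition gram_re :: "complex^'n^'m \<Rightarrow> real^'n^'n" where
  "gram_re K = (\<chi> i j. Re (\<Sum>a\<in>UNIV. cnj (K $ a $ i) * K $ a $ j))"

lemma sym_mat_gram_re: "sym_mat (gram_re K)"
  by (simp add: sym_mat_def gram_re_def transpose_def Finite_Cartesian_Product.vec_eq_iff
      algebra_simps)

lemma inner_gram_re:
  fixes K :: "complex^'n::finite^'m::finite"
  shows "x \<bullet> (gram_re K *v w) = (\<Sum>a\<in>UNIV. Re (cnj ((K *v cvec x) $ a) * (K *v cvec w) $ a))"
proof -
  have Re_term: "Re (cnj (k * complex_of_real s) * (l * complex_of_real t)) = s * (Re (cnj k * l) * t)"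
    for k l s t by (simp add: algebra_simps)
  have "x \<bullet> (gram_re K *v w) =
      (\<Sum>i\<in>UNIV. \<Sum>j\<in>UNIV. \<Sum>a\<in>UNIV. x $ i * (Re (cnj (K $ a $ i) * K $ a $ j) * w $ j))"
    by (simp only: inner_vec_def inner_real_def matrix_vector_mult_def vec_lambda_beta gram_re_def
        Re_sum sum_distrib_left sum_distrib_right mult.assoc)
  also have "\<dots> = (\<Sum>i\<in>UNIV. \<Sum>a\<in>UNIV. \<Sum>j\<in>UNIV. x $ i * (Re (cnj (K $ a $ i) * K $ a $ j) * w $ j))"
    by (rule sum.cong[OF refl], rule sum.swap)
  also have "\<dots> = (\<Sum>a\<in>UNIV. \<Sum>i\<in>UNIV. \<Sum>j\<in>UNIV. x $ i * (Re (cnj (K $ a $ i) * K $ a $ j) * w $ j))"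
    by (rule sum.swap)
  also have "\<dots> = (\<Sum>a\<in>UNIV. Re (cnj ((K *v cvec x) $ a) * (K *v cvec w) $ a))"
    by (simp only: matrix_vector_mult_def cvec_def vec_lambda_beta cnj_sum sum_product Re_sum
        Re_term mult.assoc)
  finally show ?thesis .
qed

lemma inner_gram_re_self: "x \<bullet> (gram_re K *v x) = (norm (K *v cvec x))^2"
proof -
  have "Re (cnj z * z) = (cmod z)^2" for z
    unfolding cmod_power2 by (simp add: power2_eq_square)
  then show ?thesis
    unfolding inner_gram_re power2_norm_cart by simp
qed

lemma mat_mult_vector: "Finite_Cartesian_Product.mat c *v v = c *s (v::'a::semiring_1^'n::finite)"
  by (simp add: Finite_Cartesian_Product.vec_eq_iff matrix_vector_mult_def
      Finite_Cartesian_Product.mat_def if_distrib if_distribR cong: if_cong)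

lemma hurwitz_eigenvalue_Re_neg:
  fixes F :: "real^'n::finite^'n"
  assumes "hurwitz F" "v \<noteq> 0" "cmat F *v v = z *s v"
  shows "Re z < 0"
proof -
  let ?M = "Finite_Cartesian_Product.mat z - cmat F"
  have "?M *v v = 0"
    using assms(3) by (simp add: matrix_vector_mult_diff_rdistrib mat_mult_vector)
  then have "\<not> invertible ?M"
    using assms(2) by (metis invertible_def matrix_vector_mul_assoc matrix_vector_mul_lid
        matrix_vector_mult_0_right)
  then show ?thesis
    using assms(1) unfolding hurwitz_def by (simp add: invertible_det_nz)
qed

lemma left_invertible_norm_le:
  fixes K :: "'a::{euclidean_space, real_algebra_1}^'n::finite^'m::finite"
  assumes "L ** K = id_mat"
  obtains M where "M > 0" "\<And>z. norm z \<le> M * norm (K *v z)"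
proof -
  obtain M where "M > 0" and M: "\<And>z. norm (L *v z) \<le> norm z * M"
    using bounded_linear.pos_bounded[OF matrix_vector_mul_bounded_linear[of L]] by blast
  have "norm z \<le> M * norm (K *v z)" for z
    using M[of "K *v z"] by (simp add: matrix_vector_mul_assoc assms mult.commute)
  with \<open>M > 0\<close> show ?thesis by (rule that)
qed

lemma pos_def_gram_re:
  fixes K :: "complex^'n::finite^'m::finite"
  assumes "L ** K = id_mat"
  shows "pos_def (gram_re K)"
  unfolding pos_def_def
proof (intro conjI allI impI sym_mat_gram_re)
  obtain M where "M > 0" "\<And>z. norm z \<le> M * norm (K *v z)"
    using left_invertible_norm_le[OF assms] by blast
  fix x :: "real^'n" assume "x \<noteq> 0"
  then have "0 < norm (cvec x)" by simp
  also have "\<dots> \<le> M * norm (K *v cvec x)" by fact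
  finally show "0 < x \<bullet> (gram_re K *v x)"
    using \<open>M > 0\<close> by (simp add: inner_gram_re_self zero_less_mult_iff)
qed

lemma hurwitz_lyapunov:
  fixes F :: "real^'n::finite^'n"
  assumes "hurwitz F"
  obtains P c where "pos_def P" "c > 0" "\<And>x. x \<bullet> (P *v (F *v x)) \<le> - c * (norm x)^2"
proof -
  obtain \<mu> :: "'n \<Rightarrow> complex" where ev: "\<And>a. \<exists>v. v \<noteq> 0 \<and> cmat F *v v = \<mu> a *s v"
    and approx: "\<And>\<beta>. \<beta> > 0 \<Longrightarrow> \<exists>K L C. L ** K = id_mat \<and>
      K ** cmat F = C ** K \<and> (\<forall>a. C $ a $ a = \<mu> a) \<and> (\<forall>a b. a \<noteq> b \<longrightarrow> cmod (C $ a $ b) \<le> \<beta>)"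
    using similar_almost_diagonal[of "cmat F"] by metis
  define \<alpha> where "\<alpha> = Min (range (\<lambda>a. - Re (\<mu> a)))"
  have "Re (\<mu> a) < 0" for a
    using ev[of a] hurwitz_eigenvalue_Re_neg[OF assms] by blast
  then have "\<alpha> > 0"
    unfolding \<alpha>_def by (subst Min_gr_iff) auto
  moreover have "\<alpha> \<le> - Re (\<mu> a)" for a
    unfolding \<alpha>_def by (rule Min_le) auto
  ultimately have \<alpha>: "\<alpha> > 0" "\<And>a. Re (\<mu> a) \<le> - \<alpha>"
    by (simp_all add: le_minus_iff)
  obtain K L C :: "complex^'n^'n" where LK: "L ** K = id_mat" and KF: "K ** cmat F = C ** K"
    and diag: "\<And>a. C $ a $ a = \<mu> a" and off: "\<And>a b. a \<noteq> b \<Longrightarrow> cmod (C $ a $ b) \<le> \<alpha> / (2 * CARD('n))"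
    using approx[of "\<alpha> / (2 * CARD('n))"] \<alpha> by auto
  obtain M where "M > 0" and M: "\<And>z. norm z \<le> M * norm (K *v z)"
    using left_invertible_norm_le[OF LK] by blast
  show ?thesis
  proof (rule that[of "gram_re K" "\<alpha> / (2 * M^2)"])
    show "pos_def (gram_re K)" using LK by (rule pos_def_gram_re)
    show "\<alpha> / (2 * M^2) > 0" using \<alpha> \<open>M > 0\<close> by simp
    fix x :: "real^'n"
    define y where "y = K *v cvec x"
    have "K *v cvec (F *v x) = C *v y"
      by (simp add: y_def matrix_vector_mul_assoc KF flip: cmat_mult_cvec)
    then have "x \<bullet> (gram_re K *v (F *v x)) = (\<Sum>a\<in>UNIV. Re (cnj (y $ a) * (C *v y) $ a))"
      unfolding inner_gram_re by (simp only: y_def)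
    also have "\<dots> \<le> - (\<alpha> / 2) * (norm y)^2"
      using \<alpha> off
      by (intro Re_quadratic_form_le_diag_dominant[where \<beta> = "\<alpha> / (2 * CARD('n))"]) (auto simp: diag)
    also have "\<dots> \<le> - (\<alpha> / (2 * M^2)) * (norm x)^2"
    proof -
      have "(norm x)^2 \<le> (M * norm y)^2"
        using M[of "cvec x"] by (simp add: y_def power_mono)
      then show ?thesis using \<alpha> \<open>M > 0\<close> by (simp add: field_simps power_mult_distrib)
    qed
    finally show "x \<bullet> (gram_re K *v (F *v x)) \<le> - (\<alpha> / (2 * M^2)) * (norm x)^2" .
  qed
qed

definition blk_fst :: "'a^('n + ('n + 'n)) \<Rightarrow> 'a^'n" where
  "blk_fst v = (\<chi> a. v $ Inl a)"

definition blk_snd :: "'a^('n + ('n + 'n)) \<Rightarrow> 'a^'n" where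
  "blk_snd v = (\<chi> a. v $ Inr (Inl a))"

definition blk_trd :: "'a^('n + ('n + 'n)) \<Rightarrow> 'a^'n" where
  "blk_trd v = (\<chi> a. v $ Inr (Inr a))"

lemma blk_parts_eq_0_iff:
  "v = 0 \<longleftrightarrow> blk_fst v = 0 \<and> blk_snd v = 0 \<and> (blk_trd v :: 'a::zero^'n) = 0"
  by (auto simp: blk_fst_def blk_snd_def blk_trd_def Finite_Cartesian_Product.vec_eq_iff)
    (metis sum.exhaust)

lemma sum_UNIV_Plus3:
  "sum f (UNIV :: ('n::finite + ('n + 'n)) set) =
     (\<Sum>a\<in>UNIV. f (Inl a)) + (\<Sum>a\<in>UNIV. f (Inr (Inl a))) + (\<Sum>a\<in>UNIV. f (Inr (Inr a)))"
  by (simp add: UNIV_Plus_UNIV[symmetric] sum.Plus comp_def add.assoc del: UNIV_Plus_UNIV)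

lemma inner_blk3_mult:
  fixes v :: "real^('n::finite + ('n + 'n))"
  defines "x \<equiv> blk_fst v" and "y \<equiv> blk_snd v" and "w \<equiv> blk_trd v"
  shows "v \<bullet> (blk3 A11 A12 A13 A21 A22 A23 A31 A32 A33 *v v) =
    x \<bullet> (A11 *v x) + x \<bullet> (A12 *v y) + x \<bullet> (A13 *v w) +
    y \<bullet> (A21 *v x) + y \<bullet> (A22 *v y) + y \<bullet> (A23 *v w) +
    w \<bullet> (A31 *v x) + w \<bullet> (A32 *v y) + w \<bullet> (A33 *v w)"
  unfolding x_def y_def w_def blk_fst_def blk_snd_def blk_trd_def
  by (simp add: inner_vec_def matrix_vector_mult_def blk3_def sum_UNIV_Plus3 distrib_left
      sum.distrib)

lemma sym_mat_blk3:
  assumes "sym_mat A11" "sym_mat A22" "sym_mat A33"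
    and "A21 = transpose A12" "A31 = transpose A13" "A32 = transpose A23"
  shows "sym_mat (blk3 A11 A12 A13 A21 A22 A23 A31 A32 A33)"
  using assms
  by (auto simp: sym_mat_def blk3_def transpose_def Finite_Cartesian_Product.vec_eq_iff
      split: sum.split)

lemma transpose_add: "transpose (A + B) = transpose A + (transpose B :: 'a::plus^'n^'m)"
  by (simp add: transpose_def Finite_Cartesian_Product.vec_eq_iff)

lemma transpose_diff: "transpose (A - B) = transpose A - (transpose B :: 'a::minus^'n^'m)"
  by (simp add: transpose_def Finite_Cartesian_Product.vec_eq_iff)

lemma transpose_uminus: "transpose (- A) = - (transpose A :: 'a::uminus^'n^'m)"
  by (simp add: transpose_def Finite_Cartesian_Product.vec_eq_iff)

lemma matrix_vector_mult_uminus: "(- A) *v x = - (A *v (x :: 'a::ring_1^'n::finite))"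
  by (simp add: Finite_Cartesian_Product.vec_eq_iff matrix_vector_mult_def sum_negf)

lemma inner_transpose_mult: "x \<bullet> (transpose A *v y) = (A *v x) \<bullet> (y :: real^'n::finite)"
  by (simp add: dot_lmul_matrix[symmetric] inner_commute)

lemma Theta_sym_mat:
  assumes "sym_mat P1" "sym_mat Q"
  shows "sym_mat (Theta F G P1 Q P2 P3 h k)"
  unfolding Theta_def
  by (intro sym_mat_blk3)
    (use assms in \<open>simp_all add: sym_mat_def transpose_add transpose_diff transpose_uminus
      transpose_scalar matrix_transpose_mul add_ac\<close>)

lemma Theta_quadratic_form:
  fixes v :: "real^('n::finite + ('n + 'n))"
  assumes "sym_mat P1"
  defines "x \<equiv> blk_fst v" and "y \<equiv> blk_snd v" and "w \<equiv> blk_trd v"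
  shows "v \<bullet> (Theta F G P1 Q P2 P3 h k *v v) =
    2 * k * (x \<bullet> (P1 *v x)) + 2 * ((P2 *v x) \<bullet> (F *v x))
    + 2 * (x \<bullet> (P1 *v y)) - 2 * ((P2 *v x) \<bullet> y) + 2 * ((F *v x) \<bullet> (P3 *v y))
    + 2 * h * ((P2 *v x) \<bullet> (G *v w)) - 2 * (y \<bullet> (P3 *v y)) + h * (y \<bullet> (Q *v y))
    + 2 * h * ((P3 *v y) \<bullet> (G *v w)) - h * exp (-2 * k * h) * (w \<bullet> (Q *v w))"
proof -
  have P1: "y \<bullet> (P1 *v x) = x \<bullet> (P1 *v y)"
    using inner_transpose_mult[of y P1 x] assms(1)
    by (simp add: sym_mat_def inner_commute del: transpose_matrix_vector)
  show ?thesis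
    unfolding Theta_def inner_blk3_mult x_def[symmetric] y_def[symmetric] w_def[symmetric]
    by (simp add: matrix_vector_mult_add_rdistrib matrix_vector_mult_diff_rdistrib
        matrix_vector_mult_uminus inner_add_right inner_diff_right inner_minus_right
        inner_transpose_mult P1 inner_commute algebra_simps
        flip: matrix_vector_mul_assoc scaleR_matrix_vector_assoc
        del: transpose_matrix_vector)
qed

lemma cross_term_le:
  fixes a b c u v :: real
  assumes "0 \<le> a" "0 \<le> c" "b^2 \<le> 4 * a * c"
  shows "b * u * v \<le> a * u^2 + c * v^2"
proof (cases "a = 0")
  case True
  then show ?thesis using assms by simp
next
  case False
  then have "a > 0" using assms(1) by simp
  have "4 * a * (a * u^2 + c * v^2 - b * u * v) = (2 * a * u - b * v)^2 + (4 * a * c - b^2) * v^2"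
    by (simp add: algebra_simps power2_eq_square)
  also have "\<dots> \<ge> 0" using assms(3) by simp
  finally show ?thesis using \<open>a > 0\<close> by (simp add: zero_le_mult_iff)
qed

lemma cross_terms_absorbed:
  fixes X Y W c \<epsilon> h e E k p f g :: real
  assumes "c > 0" "\<epsilon> > 0" "h > 0" "e > 0"
    and kp: "2 * k * p \<le> c / 2" and h\<epsilon>: "h \<le> \<epsilon> / 2" and f: "4 * \<epsilon> * f^2 \<le> c"
    and pg: "8 * h * p^2 * g^2 \<le> c * e" and \<epsilon>g: "8 * h * \<epsilon> * g^2 \<le> e" and "e \<le> E"
  shows "2 * k * p * X^2 - 2 * c * X^2 + 2 * \<epsilon> * f * X * Y + 2 * h * p * g * X * W
      + (h - 2 * \<epsilon>) * Y^2 + 2 * h * \<epsilon> * g * Y * W - h * E * W^2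
    \<le> - (c / 2) * X^2 - (\<epsilon> / 2) * Y^2 - (h * e / 2) * W^2"
proof -
  have XY: "(2 * \<epsilon> * f) * X * Y \<le> (c / 2) * X^2 + (\<epsilon> / 2) * Y^2"
  proof (rule cross_term_le)
    have "(2 * \<epsilon> * f)^2 = \<epsilon> * (4 * \<epsilon> * f^2)" by (simp add: power2_eq_square)
    also have "\<dots> \<le> \<epsilon> * c" using \<open>\<epsilon> > 0\<close> by (intro mult_left_mono[OF f]) simp
    finally show "(2 * \<epsilon> * f)^2 \<le> 4 * (c / 2) * (\<epsilon> / 2)" by (simp add: mult.commute)
  qed (use assms in auto)
  have XW: "(2 * h * p * g) * X * W \<le> (c / 2) * X^2 + (h * e / 4) * W^2"
  proof (rule cross_term_le)
    have "(2 * h * p * g)^2 = (h / 2) * (8 * h * p^2 * g^2)" by (simp add: power2_eq_square)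
    also have "\<dots> \<le> (h / 2) * (c * e)" using \<open>h > 0\<close> by (intro mult_left_mono[OF pg]) simp
    finally show "(2 * h * p * g)^2 \<le> 4 * (c / 2) * (h * e / 4)" by (simp add: mult_ac)
  qed (use assms in auto)
  have YW: "(2 * h * \<epsilon> * g) * Y * W \<le> (\<epsilon> / 2) * Y^2 + (h * e / 4) * W^2"
  proof (rule cross_term_le)
    have "(2 * h * \<epsilon> * g)^2 = (h * \<epsilon> / 2) * (8 * h * \<epsilon> * g^2)" by (simp add: power2_eq_square)
    also have "\<dots> \<le> (h * \<epsilon> / 2) * e" using \<open>h > 0\<close> \<open>\<epsilon> > 0\<close> by (intro mult_left_mono[OF \<epsilon>g]) simp
    finally show "(2 * h * \<epsilon> * g)^2 \<le> 4 * (\<epsilon> / 2) * (h * e / 4)" by (simp add: mult_ac)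
  qed (use assms in auto)
  have "2 * k * p * X^2 \<le> (c / 2) * X^2" using kp by (rule mult_right_mono) simp
  moreover have "h * e * W^2 \<le> h * E * W^2" using assms by (intro mult_right_mono) auto
  moreover have "h * Y^2 \<le> (\<epsilon> / 2) * Y^2" using h\<epsilon> by (rule mult_right_mono) simp
  ultimately show ?thesis using XY XW YW by (simp add: algebra_simps)
qed

lemma Theta_lyapunov_quadratic_form_le:
  fixes F G P :: "real^'n::finite^'n" and v :: "real^('n + ('n + 'n))"
  assumes "sym_mat P" and lyap: "\<And>x. x \<bullet> (P *v (F *v x)) \<le> - c * (norm x)^2"
    and Pb: "\<And>x. norm (P *v x) \<le> norm x * p" and Fb: "\<And>x. norm (F *v x) \<le> norm x * f"
    and Gb: "\<And>x. norm (G *v x) \<le> norm x * g"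
    and "0 \<le> p" "0 \<le> k" "0 \<le> \<epsilon>" "0 \<le> h"
  defines "X \<equiv> norm (blk_fst v)" and "Y \<equiv> norm (blk_snd v)" and "W \<equiv> norm (blk_trd v)"
  shows "v \<bullet> (Theta F G P id_mat P (\<epsilon> *\<^sub>R id_mat) h k *v v)
    \<le> 2 * k * p * X^2 - 2 * c * X^2 + 2 * \<epsilon> * f * X * Y + 2 * h * p * g * X * W
      + (h - 2 * \<epsilon>) * Y^2 + 2 * h * \<epsilon> * g * Y * W - h * exp (-2 * k * h) * W^2"
proof -
  define x y w where "x = blk_fst v" and "y = blk_snd v" and "w = blk_trd v"
  have P: "(P *v a) \<bullet> b = a \<bullet> (P *v b)" for a b
    using inner_transpose_mult[of a P b] \<open>sym_mat P\<close>
    by (simp add: sym_mat_def del: transpose_matrix_vector)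
  have "v \<bullet> (Theta F G P id_mat P (\<epsilon> *\<^sub>R id_mat) h k *v v)
    = 2 * k * (x \<bullet> (P *v x)) + 2 * (x \<bullet> (P *v (F *v x))) + 2 * \<epsilon> * ((F *v x) \<bullet> y)
      + 2 * h * (x \<bullet> (P *v (G *v w))) + (h - 2 * \<epsilon>) * (y \<bullet> y) + 2 * h * \<epsilon> * (y \<bullet> (G *v w))
      - h * exp (-2 * k * h) * (w \<bullet> w)"
    unfolding Theta_quadratic_form[OF \<open>sym_mat P\<close>] x_def[symmetric] y_def[symmetric] w_def[symmetric]
    by (simp add: P inner_commute[of "F *v x"] algebra_simps flip: scaleR_matrix_vector_assoc)
  also have "\<dots> \<le> 2 * k * (X * (X * p)) - 2 * c * X^2 + 2 * \<epsilon> * (X * f * Y)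
      + 2 * h * (X * (W * g * p)) + (h - 2 * \<epsilon>) * Y^2 + 2 * h * \<epsilon> * (Y * (W * g))
      - h * exp (-2 * k * h) * W^2"
  proof -
    have "x \<bullet> (P *v x) \<le> X * (X * p)"
      using norm_cauchy_schwarz[of x "P *v x"] Pb[of x] unfolding X_def x_def
      by (meson mult_left_mono norm_ge_zero order_trans)
    then have "2 * k * (x \<bullet> (P *v x)) \<le> 2 * k * (X * (X * p))"
      using \<open>0 \<le> k\<close> by (simp add: mult_left_mono)
    moreover have "(F *v x) \<bullet> y \<le> X * f * Y"
      using norm_cauchy_schwarz[of "F *v x" y] Fb[of x] unfolding X_def Y_def x_def y_def
      by (meson mult_right_mono norm_ge_zero order_trans)
    then have "2 * \<epsilon> * ((F *v x) \<bullet> y) \<le> 2 * \<epsilon> * (X * f * Y)"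
      using \<open>0 \<le> \<epsilon>\<close> by (simp add: mult_left_mono)
    moreover have "x \<bullet> (P *v (G *v w)) \<le> X * (W * g * p)"
      using norm_cauchy_schwarz[of x "P *v (G *v w)"] Pb[of "G *v w"] Gb[of w] \<open>0 \<le> p\<close>
      unfolding X_def W_def x_def w_def
      by (meson mult_left_mono mult_right_mono norm_ge_zero order_trans)
    then have "2 * h * (x \<bullet> (P *v (G *v w))) \<le> 2 * h * (X * (W * g * p))"
      using \<open>0 \<le> h\<close> by (simp add: mult_left_mono)
    moreover have "y \<bullet> (G *v w) \<le> Y * (W * g)"
      using norm_cauchy_schwarz[of y "G *v w"] Gb[of w] unfolding Y_def W_def y_def w_def
      by (meson mult_left_mono norm_ge_zero order_trans)
    then have "2 * h * \<epsilon> * (y \<bullet> (G *v w)) \<le> 2 * h * \<epsilon> * (Y * (W * g))"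
      using \<open>0 \<le> h\<close> \<open>0 \<le> \<epsilon>\<close> by (simp add: mult_left_mono)
    moreover have "x \<bullet> (P *v (F *v x)) \<le> - c * X^2"
      unfolding X_def x_def by (rule lyap)
    moreover have "(h - 2 * \<epsilon>) * (y \<bullet> y) = (h - 2 * \<epsilon>) * Y^2"
      and "h * exp (-2 * k * h) * (w \<bullet> w) = h * exp (-2 * k * h) * W^2"
      unfolding Y_def W_def y_def w_def by (simp_all add: power2_norm_eq_inner)
    ultimately show ?thesis by linarith
  qed
  finally show ?thesis by (simp add: algebra_simps power2_eq_square)
qed

lemma pos_def_mat_1: "pos_def (id_mat :: real^'n::finite^'n)"
  by (simp add: pos_def_def sym_mat_def flip: power2_norm_eq_inner)

lemma Theta_lyapunov_neg_def:
  fixes F G P :: "real^'n::finite^'n"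
  assumes "sym_mat P" and lyap: "\<And>x. x \<bullet> (P *v (F *v x)) \<le> - c * (norm x)^2"
    and Pb: "\<And>x. norm (P *v x) \<le> norm x * p" and Fb: "\<And>x. norm (F *v x) \<le> norm x * f"
    and Gb: "\<And>x. norm (G *v x) \<le> norm x * g"
    and "c > 0" "p \<ge> 0" "\<epsilon> > 0" "h > 0" "k \<ge> 0" "k * h \<le> 1"
    and kp: "2 * k * p \<le> c / 2" and h\<epsilon>: "h \<le> \<epsilon> / 2" and f: "4 * \<epsilon> * f^2 \<le> c"
    and pg: "8 * h * p^2 * g^2 \<le> c * exp (-2)" and \<epsilon>g: "8 * h * \<epsilon> * g^2 \<le> exp (-2)"
  shows "neg_def (Theta F G P id_mat P (\<epsilon> *\<^sub>R id_mat) h k)"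
  unfolding neg_def_def
proof (intro conjI allI impI)
  show "sym_mat (Theta F G P id_mat P (\<epsilon> *\<^sub>R id_mat) h k)"
    using \<open>sym_mat P\<close> pos_def_mat_1 unfolding pos_def_def by (blast intro: Theta_sym_mat)
  fix v :: "real^('n + ('n + 'n))" assume "v \<noteq> 0"
  have "exp (-2) \<le> exp (-2 * k * h)" using \<open>k * h \<le> 1\<close> by simp
  then have "v \<bullet> (Theta F G P id_mat P (\<epsilon> *\<^sub>R id_mat) h k *v v) \<le>
      - (c / 2) * (norm (blk_fst v))^2 - (\<epsilon> / 2) * (norm (blk_snd v))^2
      - (h * exp (-2) / 2) * (norm (blk_trd v))^2"
    by (rule order.trans[OF
          Theta_lyapunov_quadratic_form_le[OF \<open>sym_mat P\<close> lyap Pb Fb Gb \<open>p \<ge> 0\<close> \<open>k \<ge> 0\<close>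
            less_imp_le[OF \<open>\<epsilon> > 0\<close>] less_imp_le[OF \<open>h > 0\<close>]]
          cross_terms_absorbed[OF \<open>c > 0\<close> \<open>\<epsilon> > 0\<close> \<open>h > 0\<close> exp_gt_zero kp h\<epsilon> f pg \<epsilon>g]])
  moreover have "0 < (c / 2) * (norm (blk_fst v))^2 + (\<epsilon> / 2) * (norm (blk_snd v))^2
      + (h * exp (-2) / 2) * (norm (blk_trd v))^2"
    using \<open>v \<noteq> 0\<close> \<open>c > 0\<close> \<open>\<epsilon> > 0\<close> \<open>h > 0\<close>
    by (auto simp: blk_parts_eq_0_iff add_pos_nonneg add_nonneg_pos)
  ultimately show "v \<bullet> (Theta F G P id_mat P (\<epsilon> *\<^sub>R id_mat) h k *v v) < 0" by linarith
qed

lemma lyapunov_Theta_neg_def: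
  fixes F G P :: "real^'n::finite^'n"
  assumes "sym_mat P" "c > 0" and lyap: "\<And>x. x \<bullet> (P *v (F *v x)) \<le> - c * (norm x)^2"
  obtains h \<kappa> \<epsilon> where "h > 0" "\<kappa> > 0"
    "\<And>k. 0 \<le> k \<Longrightarrow> k \<le> \<kappa> \<Longrightarrow> neg_def (Theta F G P id_mat P (\<epsilon> *\<^sub>R id_mat) h k)"
proof -
  obtain p where "p > 0" and Pb: "\<And>x. norm (P *v x) \<le> norm x * p"
    using bounded_linear.pos_bounded[OF matrix_vector_mul_bounded_linear[of P]] by blast
  obtain f where "f > 0" and Fb: "\<And>x. norm (F *v x) \<le> norm x * f"
    using bounded_linear.pos_bounded[OF matrix_vector_mul_bounded_linear[of F]] by blast
  obtain g where "g > 0" and Gb: "\<And>x. norm (G *v x) \<le> norm x * g"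
    using bounded_linear.pos_bounded[OF matrix_vector_mul_bounded_linear[of G]] by blast
  define e where "e = exp (-2 :: real)"
  define \<epsilon> where "\<epsilon> = c / (4 * f^2)"
  define h where "h = min (min (\<epsilon> / 2) (c * e / (8 * p^2 * g^2))) (min (e / (8 * \<epsilon> * g^2)) 1)"
  define \<kappa> where "\<kappa> = min 1 (c / (4 * p))"
  have "e > 0" "\<epsilon> > 0" using \<open>c > 0\<close> \<open>f > 0\<close> by (simp_all add: e_def \<epsilon>_def)
  have "h > 0" "h \<le> \<epsilon> / 2" "h \<le> 1"
    using \<open>e > 0\<close> \<open>\<epsilon> > 0\<close> \<open>c > 0\<close> \<open>p > 0\<close> \<open>g > 0\<close> by (simp_all add: h_def)
  have "h \<le> c * e / (8 * p^2 * g^2)" "h \<le> e / (8 * \<epsilon> * g^2)"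
    by (simp_all add: h_def)
  then have pg: "8 * h * p^2 * g^2 \<le> c * e" and \<epsilon>g: "8 * h * \<epsilon> * g^2 \<le> e"
    using \<open>\<epsilon> > 0\<close> \<open>p > 0\<close> \<open>g > 0\<close> by (simp_all add: pos_le_divide_eq mult_ac)
  have "\<kappa> > 0" "\<kappa> \<le> 1" "\<kappa> \<le> c / (4 * p)"
    using \<open>c > 0\<close> \<open>p > 0\<close> by (simp_all add: \<kappa>_def)
  have f: "4 * \<epsilon> * f^2 \<le> c" using \<open>f > 0\<close> by (simp add: \<epsilon>_def)
  show ?thesis
  proof (rule that[OF \<open>h > 0\<close> \<open>\<kappa> > 0\<close>])
    fix k assume "0 \<le> k" "k \<le> \<kappa>"
    have "k * h \<le> 1"
      using \<open>0 \<le> k\<close> \<open>k \<le> \<kappa>\<close> \<open>\<kappa> \<le> 1\<close> \<open>h \<le> 1\<close> \<open>h > 0\<close> mult_mono[of k 1 h 1] by simp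
    moreover have "2 * k * p \<le> c / 2"
      using mult_right_mono[OF order.trans[OF \<open>k \<le> \<kappa>\<close> \<open>\<kappa> \<le> c / (4 * p)\<close>], of p] \<open>p > 0\<close>
      by simp
    ultimately show "neg_def (Theta F G P id_mat P (\<epsilon> *\<^sub>R id_mat) h k)"
      using \<open>p > 0\<close> \<open>\<epsilon> > 0\<close> \<open>h > 0\<close> \<open>0 \<le> k\<close> \<open>h \<le> \<epsilon> / 2\<close> pg \<epsilon>g unfolding e_def
      by (intro Theta_lyapunov_neg_def[OF \<open>sym_mat P\<close> lyap Pb Fb Gb \<open>c > 0\<close> _ _ _ _ _ _ _ f])
        simp_all
  qed
qed

theorem lemma6:
  fixes F G :: "real^'n^'n"
  assumes "hurwitz F"
  shows "\<exists>hM \<kappa> P1 Q P2 P3. hM > 0 \<and> \<kappa> > 0 \<and> pos_def P1 \<and> pos_def Q \<and>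
           neg_def (Theta F G P1 Q P2 P3 hM 0) \<and> neg_def (Theta F G P1 Q P2 P3 hM \<kappa>)"
proof -
  obtain P c where P: "pos_def P" and "c > 0" and lyap: "\<And>x. x \<bullet> (P *v (F *v x)) \<le> - c * (norm x)^2"
    using hurwitz_lyapunov[OF assms] by blast
  have "sym_mat P" using P unfolding pos_def_def by blast
  obtain h \<kappa> \<epsilon> where "h > 0" "\<kappa> > 0" and neg: "\<And>k. 0 \<le> k \<Longrightarrow> k \<le> \<kappa> \<Longrightarrow>
      neg_def (Theta F G P id_mat P (\<epsilon> *\<^sub>R id_mat) h k)"
    by (rule lyapunov_Theta_neg_def[where G=G, OF \<open>sym_mat P\<close> \<open>c > 0\<close> lyap]) blast
  show ?thesis
    by (intro exI[of _ h] exI[of _ \<kappa>] exI[of _ P] exI[of _ id_mat]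
        exI[of _ P] exI[of _ "\<epsilon> *\<^sub>R id_mat"])
      (use \<open>h > 0\<close> \<open>\<kappa> > 0\<close> P pos_def_mat_1 neg[of 0] neg[of \<kappa>] in simp)
qed

end
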